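(* Define polynomials $P_0(x)=x$ and $P_{j+1}(x)=-\big[(j+1)xP_j(x)+(1-x^2)P_j'(x)\big]$ for $j\ge0$. Then for every $j\ge0$ and every $x\in\mathbb{R}\setminus\mathbb{Z}$, $$P_j(\cos\pi x)=\pi^{-j}\sin^{j+1}(\pi x)\,\frac{d^j}{dx^j}\cot(\pi x).$$ *)

theory Defs
  imports "HOL-Analysis.Analysis" "HOL-Computational_Algebra.Polynomial"
begin

fun Pcot :: "nat \<Rightarrow> real poly" where
  "Pcot 0 = [:0, 1:]"
| "Pcot (Suc j) = - (smult (real (j + 1)) ([:0, 1:] * Pcot j) + [:1, 0, -1:] * pderiv (Pcot j))"

end

theory Submission
  imports Defs
begin

text \<open>Induction on \<open>j\<close>: the quotient rule turns \<open>pi^j P_j(cos(pi x)) / sin(pi x)^(j+1)\<close>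
  into an expression of the same shape with \<open>j + 1\<close>, and after rewriting \<open>sin(pi x)^2\<close> in the
  numerator as \<open>1 - cos(pi x)^2\<close> the new numerator polynomial is exactly the recursion for
  \<open>P_(j+1)\<close>.\<close>

definition Pcot_quotient :: "nat \<Rightarrow> real \<Rightarrow> real" where
  "Pcot_quotient j t = pi ^ j * poly (Pcot j) (cos (pi * t)) / sin (pi * t) ^ (j + 1)"

lemma sin_pi_times_nonzero: "(x::real) \<notin> \<int> \<Longrightarrow> sin (pi * x) \<noteq> 0"
  using sin_times_pi_eq_0[of x] by (simp add: mult.commute)

lemma eventually_nhds_not_Ints: "(x::real) \<notin> \<int> \<Longrightarrow> eventually (\<lambda>t. t \<notin> \<int>) (nhds x)"
  using eventually_nhds_in_open[of "- \<int>" x] closed_Ints by (simp add: open_Compl)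

lemma poly_Pcot_Suc:
  "poly (Pcot (Suc j)) c =
     - (real (j + 1) * c * poly (Pcot j) c + (1 - c\<^sup>2) * poly (pderiv (Pcot j)) c)"
  by (simp add: algebra_simps power2_eq_square)

lemma Pcot_quotient_has_real_derivative:
  assumes "x \<notin> \<int>"
  shows "(Pcot_quotient j has_real_derivative Pcot_quotient (Suc j) x) (at x)"
proof -
  let ?c = "cos (pi * x)" and ?s = "sin (pi * x)"
  have s: "?s \<noteq> 0"
    using sin_pi_times_nonzero[OF assms] .
  have num: "((\<lambda>t. pi ^ j * poly (Pcot j) (cos (pi * t))) has_real_derivative
      pi ^ j * (poly (pderiv (Pcot j)) ?c * (- ?s * pi))) (at x)"
    by (intro DERIV_cmult DERIV_chain2[OF poly_DERIV]) (auto intro!: derivative_eq_intros)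
  have den: "((\<lambda>t. sin (pi * t) ^ (j + 1)) has_real_derivative
      real (j + 1) * ?s ^ j * (?c * pi)) (at x)"
    by (auto intro!: derivative_eq_intros) (cases j; simp add: algebra_simps)
  have "(pi ^ j * (poly (pderiv (Pcot j)) ?c * (- ?s * pi)) * ?s ^ (j + 1) -
         pi ^ j * poly (Pcot j) ?c * (real (j + 1) * ?s ^ j * (?c * pi))) / (?s ^ (j + 1))\<^sup>2
      = - (pi ^ Suc j * (real (j + 1) * ?c * poly (Pcot j) ?c + ?s\<^sup>2 * poly (pderiv (Pcot j)) ?c))
          / ?s ^ (Suc j + 1)"
    using s by (simp add: field_simps power2_eq_square)
  also have "\<dots> = Pcot_quotient (Suc j) x"
    unfolding Pcot_quotient_def poly_Pcot_Suc sin_squared_eq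
    by (simp only: mult_minus_right minus_divide_left)
  finally show ?thesis
    using DERIV_divide[OF num den] s
    by (simp add: Pcot_quotient_def[abs_def] power2_eq_square)
qed

lemma higher_deriv_cot_pi:
  "x \<notin> \<int> \<Longrightarrow> (deriv ^^ j) (\<lambda>t. cot (pi * t)) x = Pcot_quotient j x"
proof (induction j arbitrary: x)
  case 0
  then show ?case
    by (simp add: Pcot_quotient_def cot_def)
next
  case (Suc j)
  have "(deriv ^^ Suc j) (\<lambda>t. cot (pi * t)) x = deriv (Pcot_quotient j) x"
    using eventually_mono[OF eventually_nhds_not_Ints[OF Suc.prems] Suc.IH]
    by (simp add: deriv_cong_ev)
  also have "\<dots> = Pcot_quotient (Suc j) x"
    by (rule DERIV_imp_deriv[OF Pcot_quotient_has_real_derivative[OF Suc.prems]])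
  finally show ?case .
qed

theorem lemma4p2:
  fixes j :: nat and x :: real
  assumes "x \<notin> \<int>"
  shows "poly (Pcot j) (cos (pi * x)) =
         (1 / pi) ^ j * sin (pi * x) ^ (j + 1) * (deriv ^^ j) (\<lambda>t. cot (pi * t)) x"
  using higher_deriv_cot_pi[OF assms, of j] sin_pi_times_nonzero[OF assms] pi_gt_zero
  by (simp add: Pcot_quotient_def field_simps)

end
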